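(* There is an absolute constant $C>0$ such that for every symmetric convex body $K$ in $\mathbb R^n$, $\vartheta(\gamma_n,K)\leqslant C\sqrt n$.
   Context: $\gamma_n$ is the standard Gaussian measure on $\mathbb R^n$, $Z\sim\gamma_n$, $F_K(t)=\gamma_n(\{x:\|x\|_K\leqslant t\})$ with density $f_K=F_K'$, $m$ is the median of $\|Z\|_K$, and $\vartheta(\gamma_n,K)=mf_K(m)$. *)

theory Defs
  imports "HOL-Probability.Probability"
begin

text \<open>Model of R^n: functions nat => real vanishing at all indices >= n.
  The topology on nat => real is the product topology (library instance), which on
  the subspace Rn n coincides with the Euclidean topology.\<close>

definition Rn :: "nat \<Rightarrow> (nat \<Rightarrow> real) set" where
  "Rn n = {x. \<forall>i\<ge>n. x i = 0}"

definition gauss_space :: "nat \<Rightarrow> (nat \<Rightarrow> real) measure" where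
  "gauss_space n = PiM {..<n} (\<lambda>_. density lborel std_normal_density)"

definition embed :: "nat \<Rightarrow> (nat \<Rightarrow> real) \<Rightarrow> (nat \<Rightarrow> real)" where
  "embed n x = (\<lambda>i. if i < n then x i else 0)"

definition gamma :: "nat \<Rightarrow> (nat \<Rightarrow> real) set \<Rightarrow> real" where
  "gamma n A = measure (gauss_space n) {x \<in> space (gauss_space n). embed n x \<in> A}"

definition symmetric_convex_body :: "nat \<Rightarrow> (nat \<Rightarrow> real) set \<Rightarrow> bool" where
  "symmetric_convex_body n K \<longleftrightarrow>
     K \<subseteq> Rn n \<and>
     compact K \<and>
     (\<forall>x\<in>K. \<forall>y\<in>K. \<forall>u::real. 0 \<le> u \<and> u \<le> 1 \<longrightarrow> (\<lambda>i. u * x i + (1 - u) * y i) \<in> K) \<and>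
     (\<exists>U. openin (top_of_set (Rn n)) U \<and> U \<noteq> {} \<and> U \<subseteq> K) \<and>
     (\<forall>x\<in>K. (\<lambda>i. - x i) \<in> K)"

definition gauge :: "(nat \<Rightarrow> real) set \<Rightarrow> (nat \<Rightarrow> real) \<Rightarrow> real" where
  "gauge K x = Inf {t::real. t > 0 \<and> (\<exists>y\<in>K. x = (\<lambda>i. t * y i))}"

definition F_K :: "nat \<Rightarrow> (nat \<Rightarrow> real) set \<Rightarrow> real \<Rightarrow> real" where
  "F_K n K t = gamma n {x \<in> Rn n. gauge K x \<le> t}"

definition is_median :: "nat \<Rightarrow> (nat \<Rightarrow> real) set \<Rightarrow> real \<Rightarrow> bool" where
  "is_median n K m \<longleftrightarrow>
     gamma n {x \<in> Rn n. gauge K x \<le> m} \<ge> 1/2 \<and> gamma n {x \<in> Rn n. gauge K x \<ge> m} \<ge> 1/2"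

definition vartheta :: "nat \<Rightarrow> (nat \<Rightarrow> real) set \<Rightarrow> real \<Rightarrow> real" where
  "vartheta n K m = m * deriv (F_K n K) m"

end

theory Submission
  imports Defs
begin

text \<open>Substituting x = t y turns F_K(t) = \<gamma>_n(t K) into the integral over K of the density
  t^n \<phi>(t y) of Z/t. Differentiating under the integral sign,
  t f_K(t) = \<integral>_K (n - t^2 |y|^2) t^n \<phi>(t y) dy = E[1{Z \<in> t K} (n - |Z|^2)].
  Since |Z|^2 has mean n and variance 2n, the AM-GM bound |a| \<le> a^2/(2 \<surd>n) + \<surd>n/2 gives
  t f_K(t) \<le> 3/2 \<surd>n.\<close>

subsection \<open>Symmetric convex bodies and their gauge\<close>

lemma symmetric_convex_bodyD:
  assumes "symmetric_convex_body n K"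
  shows "compact K" "closed K"
    "\<And>x y u. x \<in> K \<Longrightarrow> y \<in> K \<Longrightarrow> 0 \<le> u \<Longrightarrow> u \<le> 1 \<Longrightarrow> (\<lambda>i. u * x i + (1 - u) * y i) \<in> K"
    "\<And>x. x \<in> K \<Longrightarrow> (\<lambda>i. - x i) \<in> K"
  using assms unfolding symmetric_convex_body_def by (auto intro: compact_imp_closed)

lemma symmetric_convex_body_zero:
  assumes "symmetric_convex_body n K"
  shows "(\<lambda>i. 0) \<in> K"
proof -
  obtain x where x: "x \<in> K" using assms unfolding symmetric_convex_body_def by blast
  have "(\<lambda>i. (1/2) * x i + (1 - 1/2) * (- x i)) \<in> K"
    using symmetric_convex_bodyD(3)[OF assms x symmetric_convex_bodyD(4)[OF assms x], of "1/2"] by simp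
  then show ?thesis by simp
qed

lemma symmetric_convex_body_scale:
  assumes "symmetric_convex_body n K" "y \<in> K" "0 \<le> a" "a \<le> 1"
  shows "(\<lambda>i. a * y i) \<in> K"
  using symmetric_convex_bodyD(3)[OF assms(1,2) symmetric_convex_body_zero[OF assms(1)] assms(3,4)]
  by simp

text \<open>The midpoint of a point u + s x of the interior of K and of -u lies on the ray through x.\<close>

lemma symmetric_convex_body_absorbing:
  assumes K: "symmetric_convex_body n K" and x: "x \<in> Rn n"
  shows "\<exists>s>0. (\<lambda>i. s * x i) \<in> K"
proof -
  from K obtain U where U: "openin (top_of_set (Rn n)) U" "U \<noteq> {}" "U \<subseteq> K"
    unfolding symmetric_convex_body_def by blast
  then obtain V where V: "open V" "U = Rn n \<inter> V" by (auto simp: openin_open)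
  obtain u where u: "u \<in> U" using U by blast
  define h where "h = (\<lambda>s::real. (\<lambda>i. u i + s * x i))"
  have "continuous_on UNIV h" unfolding h_def
    by (intro continuous_on_coordinatewise_then_product continuous_intros)
  then have "open (h -` V)" using V(1) by (simp add: open_vimage)
  moreover have "0 \<in> h -` V" using u V by (simp add: h_def)
  ultimately obtain e where e: "e > 0" "ball 0 e \<subseteq> h -` V" by (meson openE)
  then have "h (e/2) \<in> V" using subsetD[OF e(2), of "e/2"] by simp
  moreover have "h (e/2) \<in> Rn n" using u V x by (auto simp: h_def Rn_def)
  ultimately have hK: "h (e/2) \<in> K" using V U by auto
  have uK: "(\<lambda>i. - u i) \<in> K" using u U by (intro symmetric_convex_bodyD(4)[OF K]) auto
  have "(\<lambda>i. (1/2) * h (e/2) i + (1 - 1/2) * (- u i)) \<in> K"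
    using symmetric_convex_bodyD(3)[OF K hK uK, of "1/2"] by simp
  moreover have "(\<lambda>i. (1/2) * h (e/2) i + (1 - 1/2) * (- u i)) = (\<lambda>i. (e/4) * x i)"
    by (auto simp: h_def algebra_simps)
  ultimately show ?thesis using e by (intro exI[of _ "e/4"]) auto
qed

lemma gauge_nonneg:
  assumes "symmetric_convex_body n K" "x \<in> Rn n"
  shows "gauge K x \<ge> 0"
proof -
  obtain s where s: "s > 0" "(\<lambda>i. s * x i) \<in> K"
    using symmetric_convex_body_absorbing[OF assms] by blast
  moreover have "x = (\<lambda>i. (1/s) * (s * x i))" using s by auto
  ultimately have "1/s \<in> {t. t > 0 \<and> (\<exists>y\<in>K. x = (\<lambda>i. t * y i))}"
    by (intro CollectI conjI bexI[of _ "\<lambda>i. s * x i"]) auto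
  then have "{t. t > 0 \<and> (\<exists>y\<in>K. x = (\<lambda>i. t * y i))} \<noteq> {}" by blast
  then show ?thesis unfolding gauge_def by (rule cInf_greatest) auto
qed

lemma gauge_le_iff:
  assumes K: "symmetric_convex_body n K" and x: "x \<in> Rn n" and t: "t > 0"
  shows "gauge K x \<le> t \<longleftrightarrow> (\<lambda>i. x i / t) \<in> K"
proof -
  define A where "A = {t::real. t > 0 \<and> (\<exists>y\<in>K. x = (\<lambda>i. t * y i))}"
  have memA: "s \<in> A \<longleftrightarrow> s > 0 \<and> (\<lambda>i. x i / s) \<in> K" for s
  proof
    assume "s \<in> A"
    then obtain y where "s > 0" "y \<in> K" "x = (\<lambda>i. s * y i)" unfolding A_def by blast
    then show "s > 0 \<and> (\<lambda>i. x i / s) \<in> K" by simp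
  qed (auto simp: A_def intro!: bexI[of _ "\<lambda>i. x i / s"])
  obtain s where s: "s > 0" "(\<lambda>i. s * x i) \<in> K"
    using symmetric_convex_body_absorbing[OF K x] by blast
  then have "1/s \<in> A" by (simp add: memA mult.commute)
  then have ne: "A \<noteq> {}" by blast
  have bdd: "bdd_below A" unfolding A_def by (rule bdd_belowI[of _ 0]) auto
  have upward_closed: "s' \<in> A" if "s \<in> A" "s \<le> s'" for s s'
  proof -
    have s: "s > 0" "(\<lambda>i. x i / s) \<in> K" using that memA by auto
    have "(\<lambda>i. (s/s') * (x i / s)) \<in> K"
      using s that by (intro symmetric_convex_body_scale[OF K]) auto
    moreover have "(\<lambda>i. (s/s') * (x i / s)) = (\<lambda>i. x i / s')" using s by auto
    ultimately show ?thesis using memA s that by auto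
  qed
  show ?thesis
  proof
    assume "(\<lambda>i. x i / t) \<in> K"
    then have "t \<in> A" using memA t by auto
    then show "gauge K x \<le> t" unfolding gauge_def A_def[symmetric] using bdd by (rule cInf_lower)
  next
    assume "gauge K x \<le> t"
    then have "Inf A \<le> t" unfolding gauge_def A_def .
    then have above: "r \<in> A" if "r > t" for r
      using cInf_lessD[OF ne, of r] upward_closed that by fastforce
    define f where "f = (\<lambda>r::real. (\<lambda>i. x i / r))"
    have "continuous_on {t..} f" unfolding f_def using t
      by (intro continuous_on_coordinatewise_then_product continuous_intros) auto
    then have closed: "closed ({t..} \<inter> f -` K)"
      using continuous_closed_preimage symmetric_convex_bodyD(2)[OF K] by auto
    have "t islimpt {t<..<t+1}" by (rule islimpt_greaterThanLessThan1) simp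
    moreover have "{t<..<t+1} \<subseteq> {t..} \<inter> f -` K" using above memA by (auto simp: f_def)
    ultimately have "t islimpt ({t..} \<inter> f -` K)" by (rule islimpt_subset)
    then show "(\<lambda>i. x i / t) \<in> K" using closed closed_limpt by (auto simp: f_def)
  qed
qed

lemma is_median_nonneg:
  assumes K: "symmetric_convex_body n K" and median: "is_median n K m"
  shows "m \<ge> 0"
proof (rule ccontr)
  assume "\<not> m \<ge> 0"
  then have "{x \<in> Rn n. gauge K x \<le> m} = {}" using gauge_nonneg[OF K] by fastforce
  then have "gamma n {x \<in> Rn n. gauge K x \<le> m} = gamma n {}" by (simp only:)
  also have "\<dots> = 0" by (simp add: gamma_def)
  finally show False using median by (simp add: is_median_def)
qed

subsection \<open>The squared norm of a standard Gaussian vector\<close>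

abbreviation std_normal :: "real measure" where
  "std_normal \<equiv> density lborel std_normal_density"

definition sqnorm :: "nat \<Rightarrow> (nat \<Rightarrow> real) \<Rightarrow> real" where
  "sqnorm n y = (\<Sum>i<n. (y i)\<^sup>2)"

lemma sqnorm_nonneg: "sqnorm n y \<ge> 0"
  unfolding sqnorm_def by (intro sum_nonneg) auto

lemma sqnorm_measurable_gauss_space[measurable]: "sqnorm n \<in> borel_measurable (gauss_space n)"
  unfolding sqnorm_def gauss_space_def by measurable

lemma prob_space_std_normal: "prob_space std_normal"
  by (rule prob_space_normal_density) simp

lemma product_prob_space_std_normal: "product_prob_space (\<lambda>_::nat. std_normal)"
  by (rule product_prob_spaceI) (rule prob_space_std_normal)

lemma prob_space_gauss_space: "prob_space (gauss_space n)"
proof -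
  interpret product_prob_space "\<lambda>_::nat. std_normal" "{..<n}"
    by (rule product_prob_space_std_normal)
  show ?thesis unfolding gauss_space_def by (rule P.prob_space_axioms)
qed

lemma std_normal_even_moment:
  "has_bochner_integral std_normal (\<lambda>x. x ^ (2 * k)) (fact (2 * k) / (2 ^ k * fact k))"
  by (rule has_bochner_integral_density) (auto simp: normal_density_nonneg intro: std_normal_moment_even)

lemma std_normal_centered_square:
  "has_bochner_integral std_normal (\<lambda>x. x\<^sup>2 - 1) 0"
  "has_bochner_integral std_normal (\<lambda>x. (x\<^sup>2 - 1) * (x\<^sup>2 - 1)) 2"
proof -
  have one: "has_bochner_integral std_normal (\<lambda>x. 1) (1::real)"
    using std_normal_even_moment[of 0] by simp
  have second: "has_bochner_integral std_normal (\<lambda>x. x\<^sup>2) 1"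
    using std_normal_even_moment[of 1] by simp
  have fourth: "has_bochner_integral std_normal (\<lambda>x. x ^ 4) 3"
    using std_normal_even_moment[of 2] by (simp add: fact_numeral)
  show "has_bochner_integral std_normal (\<lambda>x. x\<^sup>2 - 1) 0"
    using has_bochner_integral_diff[OF second one] by simp
  have "has_bochner_integral std_normal (\<lambda>x. x ^ 4 - 2 * x\<^sup>2 + 1) (3 - 2 * 1 + 1)"
    by (intro has_bochner_integral_add has_bochner_integral_diff has_bochner_integral_mult_right
        one second fourth)
  moreover have "(\<lambda>x::real. x ^ 4 - 2 * x\<^sup>2 + 1) = (\<lambda>x. (x\<^sup>2 - 1) * (x\<^sup>2 - 1))"
    by (auto simp: algebra_simps power2_eq_square power4_eq_xxxx)
  ultimately show "has_bochner_integral std_normal (\<lambda>x. (x\<^sup>2 - 1) * (x\<^sup>2 - 1)) 2" by simp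
qed

text \<open>Expanding the square, each term (Z_i^2 - 1)(Z_j^2 - 1) is a product over all coordinates
  of functions of single coordinates, so its expectation factorises.\<close>

lemma gauss_sqnorm_variance:
  shows "integrable (gauss_space n) (\<lambda>z. (sqnorm n z - n)\<^sup>2)"
    "(\<integral>z. (sqnorm n z - n)\<^sup>2 \<partial>gauss_space n) = 2 * n"
proof -
  interpret P: product_prob_space "\<lambda>_::nat. std_normal" "{..<n}"
    by (rule product_prob_space_std_normal)
  define f :: "nat \<Rightarrow> nat \<Rightarrow> nat \<Rightarrow> real \<Rightarrow> real" where
    "f i j k x = (if k = i then x\<^sup>2 - 1 else 1) * (if k = j then x\<^sup>2 - 1 else 1)" for i j k x
  have f_integral: "has_bochner_integral std_normal (f i j k)
      (if k = i \<and> k = j then 2 else if k = i \<or> k = j then 0 else 1)" for i j k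
    using std_normal_centered_square std_normal_even_moment[of 0]
    unfolding f_def by (cases "k = i"; cases "k = j") auto
  have square: "(sqnorm n z - n)\<^sup>2 = (\<Sum>i<n. \<Sum>j<n. \<Prod>k<n. f i j k (z k))" for z
  proof -
    have "sqnorm n z - n = (\<Sum>i<n. (z i)\<^sup>2 - 1)"
      by (simp add: sqnorm_def sum_subtractf)
    then show ?thesis
      by (simp add: power2_eq_square sum_product f_def prod.distrib prod.delta)
  qed
  have int: "integrable (gauss_space n) (\<lambda>z. \<Prod>k<n. f i j k (z k))" for i j
    unfolding gauss_space_def using f_integral
    by (intro P.product_integrable_prod) (auto intro: integrable.intros)
  have "(\<integral>z. (\<Prod>k<n. f i j k (z k)) \<partial>gauss_space n) = (if i = j then 2 else 0)"
    if "i < n" "j < n" for i j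
  proof -
    have "(\<integral>z. (\<Prod>k<n. f i j k (z k)) \<partial>gauss_space n) = (\<Prod>k<n. integral\<^sup>L std_normal (f i j k))"
      unfolding gauss_space_def using f_integral
      by (intro P.product_integral_prod) (auto intro: integrable.intros)
    also have "\<dots> = (\<Prod>k<n. if k = i \<and> k = j then 2 else if k = i \<or> k = j then 0 else 1)"
      by (intro prod.cong refl has_bochner_integral_integral_eq f_integral)
    also have "\<dots> = (if i = j then 2 else 0)"
      using that by (auto simp: prod.delta cong: if_cong intro: prod_zero)
    finally show ?thesis .
  qed
  then show "(\<integral>z. (sqnorm n z - n)\<^sup>2 \<partial>gauss_space n) = 2 * n"
    unfolding square using int by (simp add: integrable_sum)
  show "integrable (gauss_space n) (\<lambda>z. (sqnorm n z - n)\<^sup>2)"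
    unfolding square using int by auto
qed

lemma abs_le_amgm:
  fixes a s :: real
  assumes "s > 0"
  shows "\<bar>a\<bar> \<le> a\<^sup>2 / (2 * s) + s / 2"
proof -
  have "2 * s * \<bar>a\<bar> \<le> a\<^sup>2 + s\<^sup>2"
    using sum_squares_bound[of "\<bar>a\<bar>" s] by (simp add: power2_eq_square algebra_simps)
  then show ?thesis using assms by (simp add: field_simps power2_eq_square)
qed

lemma gauss_sqnorm_deviation_weighted_le:
  assumes [measurable]: "f \<in> borel_measurable (gauss_space n)"
    and f_bound: "\<And>z. \<bar>f z\<bar> \<le> 1" and n: "n \<ge> 1"
  shows "(\<integral>z. f z * (n - sqnorm n z) \<partial>gauss_space n) \<le> 3/2 * sqrt n"
proof -
  interpret prob_space "gauss_space n" by (rule prob_space_gauss_space)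
  have sqrt_n: "sqrt n > 0" using n by simp
  define R where "R z = (sqnorm n z - n)\<^sup>2 / (2 * sqrt n) + sqrt n / 2" for z
  have pointwise: "\<bar>f z * (n - sqnorm n z)\<bar> \<le> R z" for z
  proof -
    have "\<bar>f z * (n - sqnorm n z)\<bar> \<le> \<bar>n - sqnorm n z\<bar>"
      using f_bound[of z] by (simp add: abs_mult mult_left_le_one_le)
    also have "\<dots> \<le> R z"
      using abs_le_amgm[OF sqrt_n, of "n - sqnorm n z"] by (simp add: R_def power2_commute)
    finally show ?thesis .
  qed
  have int_R: "integrable (gauss_space n) R"
    unfolding R_def using gauss_sqnorm_variance(1)[of n] by simp
  have "integrable (gauss_space n) (\<lambda>z. f z * (n - sqnorm n z))"
    using pointwise by (intro Bochner_Integration.integrable_bound[OF int_R] AE_I2)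
      (auto intro: order_trans[OF _ abs_ge_self])
  then have "(\<integral>z. f z * (n - sqnorm n z) \<partial>gauss_space n) \<le> (\<integral>z. R z \<partial>gauss_space n)"
    using int_R pointwise abs_le_D1 by (intro integral_mono) blast+
  also have "\<dots> = 2 * n / (2 * sqrt n) + sqrt n / 2"
    unfolding R_def using gauss_sqnorm_variance[of n] by (simp add: prob_space)
  also have "\<dots> = 3/2 * sqrt n"
    using sqrt_n by (simp add: field_simps)
  finally show ?thesis .
qed

subsection \<open>The density of a rescaled Gaussian vector\<close>

definition lborel_Pi :: "nat \<Rightarrow> (nat \<Rightarrow> real) measure" where
  "lborel_Pi n = PiM {..<n} (\<lambda>_. lborel)"

definition divide_coords :: "nat \<Rightarrow> real \<Rightarrow> (nat \<Rightarrow> real) \<Rightarrow> (nat \<Rightarrow> real)" where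
  "divide_coords n t = compose {..<n} (\<lambda>x. x / t)"

definition scaled_gauss_density :: "nat \<Rightarrow> real \<Rightarrow> (nat \<Rightarrow> real) \<Rightarrow> real" where
  "scaled_gauss_density n t y = (t / sqrt (2 * pi)) ^ n * exp (- (t\<^sup>2 * sqnorm n y) / 2)"

lemma sets_gauss_space: "sets (gauss_space n) = sets (lborel_Pi n)"
  unfolding gauss_space_def lborel_Pi_def by (intro sets_PiM_cong) auto

lemma divide_coords_measurable[measurable]:
  "divide_coords n t \<in> measurable (gauss_space n) (gauss_space n)"
  unfolding divide_coords_def compose_def gauss_space_def by measurable

lemma scaled_gauss_density_nonneg: "t > 0 \<Longrightarrow> scaled_gauss_density n t y \<ge> 0"
  by (simp add: scaled_gauss_density_def)

lemma scaled_gauss_density_le: "t > 0 \<Longrightarrow> scaled_gauss_density n t y \<le> (t / sqrt (2 * pi)) ^ n"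
  unfolding scaled_gauss_density_def using sqnorm_nonneg[of n y] by (intro mult_left_le) auto

lemma sqnorm_measurable_lborel_Pi[measurable]: "sqnorm n \<in> borel_measurable (lborel_Pi n)"
  unfolding sqnorm_def lborel_Pi_def by measurable

lemma sqnorm_divide_coords:
  assumes "t > 0"
  shows "t\<^sup>2 * sqnorm n (divide_coords n t z) = sqnorm n z"
proof -
  have "t\<^sup>2 * sqnorm n (divide_coords n t z) = (\<Sum>i<n. t\<^sup>2 * (z i / t)\<^sup>2)"
    by (simp add: sqnorm_def divide_coords_def compose_def sum_distrib_left)
  also have "\<dots> = sqnorm n z" using assms by (simp add: sqnorm_def power_divide)
  finally show ?thesis .
qed

lemma scaled_gauss_density_measurable[measurable]:
  "scaled_gauss_density n t \<in> borel_measurable (lborel_Pi n)"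
  unfolding scaled_gauss_density_def sqnorm_def lborel_Pi_def by measurable

lemma indicator_PiE_prod:
  assumes "y \<in> extensional I" "finite I"
  shows "(indicator (PiE I A) y :: ennreal) = (\<Prod>i\<in>I. indicator (A i) (y i))"
proof (cases "\<forall>i\<in>I. y i \<in> A i")
  case True
  then show ?thesis using assms by (simp add: PiE_def)
next
  case False
  then obtain i where i: "i \<in> I" "y i \<notin> A i" by blast
  then have "y \<notin> PiE I A" by auto
  moreover have "(\<Prod>i\<in>I. (indicator (A i) (y i) :: ennreal)) = 0"
    using i assms by (intro prod_zero bexI[of _ i]) auto
  ultimately show ?thesis by simp
qed

lemma PiM_density_lborel:
  fixes f :: "real \<Rightarrow> real"
  assumes fin: "finite I" and [measurable]: "f \<in> borel_measurable borel" and f_nonneg: "\<And>x. f x \<ge> 0"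
    and prob: "prob_space (density lborel f)"
  shows "PiM I (\<lambda>_::'i. density lborel f) = density (PiM I (\<lambda>_. lborel)) (\<lambda>y. \<Prod>i\<in>I. f (y i))"
proof -
  interpret D: product_prob_space "\<lambda>_::'i. density lborel f" I
    by (rule product_prob_spaceI) (rule prob)
  interpret L: product_sigma_finite "\<lambda>_::'i. lborel"
    unfolding product_sigma_finite_def by (simp add: sigma_finite_lborel)
  have "density (PiM I (\<lambda>_. lborel)) (\<lambda>y. \<Prod>i\<in>I. f (y i)) = PiM I (\<lambda>_. density lborel f)"
  proof (rule D.PiM_eqI[OF fin])
    show "sets (density (PiM I (\<lambda>_. lborel)) (\<lambda>y. \<Prod>i\<in>I. f (y i))) = sets (PiM I (\<lambda>_. density lborel f))"
      by (simp only: sets_density) (intro sets_PiM_cong; simp)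
  next
    fix A assume "\<And>i. i \<in> I \<Longrightarrow> A i \<in> sets (density lborel f)"
    then have A: "\<And>i. i \<in> I \<Longrightarrow> A i \<in> sets borel" by simp
    have "emeasure (density (PiM I (\<lambda>_. lborel)) (\<lambda>y. \<Prod>i\<in>I. f (y i))) (PiE I A)
        = (\<integral>\<^sup>+ y. ennreal (\<Prod>i\<in>I. f (y i)) * indicator (PiE I A) y \<partial>PiM I (\<lambda>_. lborel))"
      using A by (subst emeasure_density) (auto intro: sets_PiM_I_finite fin)
    also have "\<dots> = (\<integral>\<^sup>+ y. (\<Prod>i\<in>I. ennreal (f (y i)) * indicator (A i) (y i)) \<partial>PiM I (\<lambda>_. lborel))"
    proof (rule nn_integral_cong)
      fix y :: "'i \<Rightarrow> real" assume "y \<in> space (PiM I (\<lambda>_::'i. lborel))"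
      then have "y \<in> extensional I" by (simp add: space_PiM PiE_def)
      then show "ennreal (\<Prod>i\<in>I. f (y i)) * indicator (PiE I A) y
          = (\<Prod>i\<in>I. ennreal (f (y i)) * indicator (A i) (y i))"
        using fin f_nonneg by (simp add: indicator_PiE_prod prod.distrib prod_ennreal)
    qed
    also have "\<dots> = (\<Prod>i\<in>I. \<integral>\<^sup>+ x. ennreal (f x) * indicator (A i) x \<partial>lborel)"
      using A by (intro L.product_nn_integral_prod fin) auto
    also have "\<dots> = (\<Prod>i\<in>I. emeasure (density lborel f) (A i))"
      using A by (intro prod.cong refl) (simp add: emeasure_density)
    finally show "emeasure (density (PiM I (\<lambda>_. lborel)) (\<lambda>y. \<Prod>i\<in>I. f (y i))) (PiE I A)
        = (\<Prod>i\<in>I. emeasure (density lborel f) (A i))" .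
  qed
  then show ?thesis by simp
qed

lemma distr_std_normal_divide:
  assumes "t > 0"
  shows "distr std_normal std_normal (\<lambda>x. x / t) = density lborel (normal_density 0 (1/t))"
proof -
  interpret prob_space std_normal by (rule prob_space_std_normal)
  have "distributed std_normal lborel (\<lambda>x. x) std_normal_density"
    unfolding distributed_def by (simp add: distr_id2)
  from normal_density_affine[OF this, of "1/t" 0] assms
  have "distr std_normal lborel (\<lambda>x. 1/t * x) = density lborel (normal_density 0 (1/t))"
    unfolding distributed_def by simp
  moreover have "distr std_normal std_normal (\<lambda>x. x / t) = distr std_normal lborel (\<lambda>x. 1/t * x)"
    by (intro distr_cong) auto
  ultimately show ?thesis by simp
qed

lemma prod_normal_density_eq_scaled_gauss_density:
  assumes "t > 0"
  shows "(\<Prod>i<n. normal_density 0 (1/t) (y i)) = scaled_gauss_density n t y"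
proof -
  have "normal_density 0 (1/t) x = (t / sqrt (2 * pi)) * exp (- (t\<^sup>2 * x\<^sup>2) / 2)" for x
    using assms by (simp add: normal_density_def real_sqrt_divide power_divide real_sqrt_mult field_simps)
  then have "(\<Prod>i<n. normal_density 0 (1/t) (y i))
      = (t / sqrt (2 * pi)) ^ n * exp (\<Sum>i<n. - (t\<^sup>2 * (y i)\<^sup>2) / 2)"
    by (simp only: prod.distrib prod_constant card_lessThan exp_sum[OF finite_lessThan])
  also have "(\<Sum>i<n. - (t\<^sup>2 * (y i)\<^sup>2) / 2) = - (t\<^sup>2 * sqnorm n y) / 2"
    by (simp add: sqnorm_def sum_distrib_left sum_divide_distrib sum_negf)
  finally show ?thesis by (simp add: scaled_gauss_density_def)
qed

lemma distr_gauss_space_divide_coords: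
  assumes "t > 0"
  shows "distr (gauss_space n) (gauss_space n) (divide_coords n t)
    = density (lborel_Pi n) (scaled_gauss_density n t)"
proof -
  have "distr (gauss_space n) (gauss_space n) (divide_coords n t)
      = PiM {..<n} (\<lambda>_. distr std_normal std_normal (\<lambda>x. x / t))"
    unfolding gauss_space_def divide_coords_def
    by (rule distr_PiM_finite_prob_space') (auto intro: prob_space_std_normal)
  also have "\<dots> = PiM {..<n} (\<lambda>_. density lborel (normal_density 0 (1/t)))"
    using assms by (simp add: distr_std_normal_divide)
  also have "\<dots> = density (lborel_Pi n) (\<lambda>y. \<Prod>i<n. normal_density 0 (1/t) (y i))"
    unfolding lborel_Pi_def using assms
    by (intro PiM_density_lborel) (auto intro: prob_space_normal_density normal_density_nonneg)
  also have "\<dots> = density (lborel_Pi n) (scaled_gauss_density n t)"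
    using assms by (simp add: prod_normal_density_eq_scaled_gauss_density)
  finally show ?thesis .
qed

lemma integral_scaled_gauss_density:
  assumes "t > 0" and [measurable]: "h \<in> borel_measurable (lborel_Pi n)"
  shows "(\<integral>y. scaled_gauss_density n t y * h y \<partial>lborel_Pi n)
    = (\<integral>z. h (divide_coords n t z) \<partial>gauss_space n)"
proof -
  have "(\<integral>y. scaled_gauss_density n t y * h y \<partial>lborel_Pi n)
      = (\<integral>y. h y \<partial>density (lborel_Pi n) (scaled_gauss_density n t))"
    using assms by (subst integral_density) (auto simp: scaled_gauss_density_nonneg)
  also have "\<dots> = (\<integral>y. h y \<partial>distr (gauss_space n) (gauss_space n) (divide_coords n t))"
    using assms by (simp add: distr_gauss_space_divide_coords)
  also have "\<dots> = (\<integral>z. h (divide_coords n t z) \<partial>gauss_space n)"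
    using divide_coords_measurable
    by (subst integral_distr) (auto simp: measurable_cong_sets[OF sets_gauss_space refl])
  finally show ?thesis .
qed

subsection \<open>The distribution function as a parameter integral\<close>

definition body_coords :: "nat \<Rightarrow> (nat \<Rightarrow> real) set \<Rightarrow> (nat \<Rightarrow> real) set" where
  "body_coords n K = {y \<in> space (gauss_space n). embed n y \<in> K}"

lemma embed_measurable: "embed n \<in> borel_measurable (gauss_space n)"
proof (rule measurable_coordinatewise_then_product)
  fix i
  have "(\<lambda>x. x i) \<in> measurable (gauss_space n) std_normal" if "i < n"
    using that unfolding gauss_space_def by (intro measurable_component_singleton) auto
  then have "(\<lambda>x. x i) \<in> borel_measurable (gauss_space n)" if "i < n"
    using that measurable_cong_sets[OF refl, of std_normal borel "gauss_space n"] by simp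
  then show "(\<lambda>x. embed n x i) \<in> borel_measurable (gauss_space n)"
    by (cases "i < n") (simp_all add: embed_def)
qed

lemma sets_body_coords:
  assumes "closed K"
  shows "body_coords n K \<in> sets (gauss_space n)" "body_coords n K \<in> sets (lborel_Pi n)"
proof -
  have "embed n -` K \<inter> space (gauss_space n) \<in> sets (gauss_space n)"
    using measurable_sets[OF embed_measurable borel_closed[OF assms]] .
  moreover have "embed n -` K \<inter> space (gauss_space n) = body_coords n K"
    by (auto simp: body_coords_def)
  ultimately show "body_coords n K \<in> sets (gauss_space n)" by simp
  then show "body_coords n K \<in> sets (lborel_Pi n)" by (simp add: sets_gauss_space)
qed

lemma sqnorm_embed: "sqnorm n (embed n y) = sqnorm n y"
  by (simp add: sqnorm_def embed_def)

lemma body_coords_sqnorm_bounded: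
  assumes "compact K"
  obtains Q where "\<And>y. y \<in> body_coords n K \<Longrightarrow> sqnorm n y \<le> Q"
proof -
  have "continuous_on UNIV (sqnorm n)"
    unfolding sqnorm_def by (intro continuous_on_sum continuous_on_power continuous_on_product_coordinates)
  then have "bounded (sqnorm n ` K)"
    by (intro compact_imp_bounded compact_continuous_image[OF continuous_on_subset assms]) auto
  then obtain Q where Q: "\<And>x. x \<in> K \<Longrightarrow> \<bar>sqnorm n x\<bar> \<le> Q" unfolding bounded_real by blast
  show ?thesis
  proof (rule that)
    fix y assume "y \<in> body_coords n K"
    then have "\<bar>sqnorm n (embed n y)\<bar> \<le> Q" using Q by (simp add: body_coords_def)
    then show "sqnorm n y \<le> Q" by (simp add: sqnorm_embed)
  qed
qed

lemma emeasure_body_coords_finite: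
  assumes "compact K"
  shows "emeasure (lborel_Pi n) (body_coords n K) < \<infinity>"
proof -
  obtain Q where Q: "\<And>y. y \<in> body_coords n K \<Longrightarrow> sqnorm n y \<le> Q"
    using body_coords_sqnorm_bounded[OF assms] by blast
  interpret product_sigma_finite "\<lambda>_::nat. lborel"
    unfolding product_sigma_finite_def by (simp add: sigma_finite_lborel)
  have "body_coords n K \<subseteq> PiE {..<n} (\<lambda>_. {- sqrt Q..sqrt Q})"
  proof
    fix y assume y: "y \<in> body_coords n K"
    have "\<bar>y i\<bar> \<le> sqrt Q" if "i < n" for i
    proof -
      have "(y i)\<^sup>2 \<le> sqnorm n y" unfolding sqnorm_def using that by (intro member_le_sum) auto
      then show ?thesis using Q[OF y] by (intro real_le_rsqrt) simp
    qed
    moreover have "y \<in> PiE {..<n} (\<lambda>_. UNIV)"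
      using y by (simp add: body_coords_def gauss_space_def space_PiM)
    ultimately show "y \<in> PiE {..<n} (\<lambda>_. {- sqrt Q..sqrt Q})"
      by (auto simp: PiE_def abs_le_iff minus_le_iff)
  qed
  then have "emeasure (lborel_Pi n) (body_coords n K)
      \<le> emeasure (lborel_Pi n) (PiE {..<n} (\<lambda>_. {- sqrt Q..sqrt Q}))"
    unfolding lborel_Pi_def by (intro emeasure_mono) (auto intro: sets_PiM_I_finite)
  also have "\<dots> = (\<Prod>i<n. emeasure lborel {- sqrt Q..sqrt Q})"
    unfolding lborel_Pi_def by (rule emeasure_PiM) auto
  also have "\<dots> < \<infinity>"
    by (simp add: less_top[symmetric] power_eq_top_ennreal emeasure_lborel_Icc_eq)
  finally show ?thesis .
qed

lemma embed_divide_coords: "embed n (divide_coords n t y) = (\<lambda>i. embed n y i / t)"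
  by (auto simp: embed_def divide_coords_def compose_def)

lemma F_K_eq_integral:
  assumes K: "symmetric_convex_body n K" and t: "t > 0"
  shows "F_K n K t = (\<integral>y. scaled_gauss_density n t y * indicator (body_coords n K) y \<partial>lborel_Pi n)"
proof -
  let ?N = "gauss_space n" and ?S = "body_coords n K"
  have S: "?S \<in> sets ?N" "?S \<in> sets (lborel_Pi n)"
    using sets_body_coords[OF symmetric_convex_bodyD(2)[OF K]] by auto
  have embed_Rn: "embed n x \<in> Rn n" for x by (simp add: embed_def Rn_def)
  have "{x \<in> space ?N. embed n x \<in> {x \<in> Rn n. gauge K x \<le> t}} = divide_coords n t -` ?S \<inter> space ?N"
    using gauge_le_iff[OF K embed_Rn t] embed_Rn measurable_space[OF divide_coords_measurable]
    by (auto simp: body_coords_def embed_divide_coords)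
  then have "F_K n K t = measure ?N (divide_coords n t -` ?S \<inter> space ?N)"
    unfolding F_K_def gamma_def by simp
  also have "\<dots> = (\<integral>z. indicator (divide_coords n t -` ?S \<inter> space ?N) z \<partial>?N)"
    using measurable_sets[OF divide_coords_measurable S(1)] by simp
  also have "\<dots> = (\<integral>z. indicator ?S (divide_coords n t z) \<partial>?N)"
    by (intro Bochner_Integration.integral_cong) (auto simp: indicator_def)
  also have "\<dots> = (\<integral>y. scaled_gauss_density n t y * indicator ?S y \<partial>lborel_Pi n)"
    using S(2) t by (intro integral_scaled_gauss_density[symmetric]) auto
  finally show ?thesis .
qed

subsection \<open>Differentiation under the integral sign\<close>

lemma has_real_derivative_integral_dominated:
  fixes g g' :: "real \<Rightarrow> 'a \<Rightarrow> real"
  assumes r: "r > 0"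
    and [measurable]: "\<And>t. g t \<in> borel_measurable M" "g' m \<in> borel_measurable M"
    and int: "\<And>t. \<bar>t - m\<bar> < r \<Longrightarrow> integrable M (g t)"
    and der: "\<And>x t. x \<in> space M \<Longrightarrow> \<bar>t - m\<bar> < r \<Longrightarrow> ((\<lambda>t. g t x) has_real_derivative g' t x) (at t)"
    and w: "integrable M w"
    and bound: "\<And>x t. x \<in> space M \<Longrightarrow> \<bar>t - m\<bar> < r \<Longrightarrow> \<bar>g' t x\<bar> \<le> w x"
  shows "((\<lambda>t. \<integral>x. g t x \<partial>M) has_real_derivative (\<integral>x. g' m x \<partial>M)) (at m)"
  unfolding DERIV_def
proof (subst tendsto_at_iff_sequentially, intro allI impI)
  have quotient_bound: "\<bar>(g (m + h) x - g m x) / h\<bar> \<le> w x"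
    if h: "h \<noteq> 0" "\<bar>h\<bar> < r" and x: "x \<in> space M" for h x
  proof -
    have mvt: "\<exists>z. a < z \<and> z < b \<and> g b x - g a x = (b - a) * g' z x"
      if "a < b" "\<bar>a - m\<bar> < r" "\<bar>b - m\<bar> < r" for a b
      using that by (intro MVT2 der[OF x]) auto
    consider "h > 0" | "h < 0" using h(1) by linarith
    then obtain z where "\<bar>z - m\<bar> < r" "g (m + h) x - g m x = h * g' z x"
    proof cases
      case 1
      with mvt[of m "m + h"] h r obtain z where "m < z" "z < m + h"
        "g (m + h) x - g m x = h * g' z x" by auto
      then show ?thesis using that[of z] h by auto
    next
      case 2
      with mvt[of "m + h" m] h r obtain z where "m + h < z" "z < m"
        "g m x - g (m + h) x = - h * g' z x" by auto
      then show ?thesis using that[of z] h by (auto simp: algebra_simps)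
    qed
    then show ?thesis using bound[OF x] h(1) by (simp add: abs_mult)
  qed
  fix X :: "nat \<Rightarrow> real"
  assume X0: "\<forall>i. X i \<in> UNIV - {0}" and X: "X \<longlonglongrightarrow> 0"
  from X r obtain N where N: "\<And>i. i \<ge> N \<Longrightarrow> \<bar>X i\<bar> < r"
    by (metis LIMSEQ_iff diff_zero real_norm_def)
  define s where "s = (\<lambda>i x. (g (m + X (i + N)) x - g m x) / X (i + N))"
  have Xn: "X (i + N) \<noteq> 0" "\<bar>X (i + N)\<bar> < r" for i using X0 N by auto
  have "(\<lambda>i. integral\<^sup>L M (s i)) \<longlonglongrightarrow> integral\<^sup>L M (g' m)"
  proof (rule integral_dominated_convergence[OF _ _ w])
    show "s i \<in> borel_measurable M" for i unfolding s_def by measurable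
    show "AE x in M. (\<lambda>i. s i x) \<longlonglongrightarrow> g' m x"
    proof (rule AE_I2)
      fix x assume x: "x \<in> space M"
      have "((\<lambda>h. (g (m + h) x - g m x) / h) \<longlongrightarrow> g' m x) (at 0)"
        using der[OF x] r unfolding DERIV_def by simp
      then have sequentially: "\<forall>X. (\<forall>i. X i \<in> UNIV - {0}) \<longrightarrow> X \<longlonglongrightarrow> 0 \<longrightarrow>
          (\<lambda>i. (g (m + X i) x - g m x) / X i) \<longlonglongrightarrow> g' m x"
        unfolding tendsto_at_iff_sequentially comp_def .
      have "(\<lambda>i. X (i + N)) \<longlonglongrightarrow> 0" using X by (rule LIMSEQ_ignore_initial_segment)
      moreover have "\<forall>i. X (i + N) \<in> UNIV - {0}" using X0 by blast
      ultimately show "(\<lambda>i. s i x) \<longlonglongrightarrow> g' m x"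
        unfolding s_def using sequentially by (elim allE[of _ "\<lambda>i. X (i + N)"]) simp
    qed
    show "AE x in M. norm (s i x) \<le> w x" for i
      using quotient_bound[OF Xn] unfolding s_def by auto
  qed measurable
  moreover have "integral\<^sup>L M (s i) = ((\<integral>x. g (m + X (i + N)) x \<partial>M) - (\<integral>x. g m x \<partial>M)) / X (i + N)"
    for i
  proof -
    have "integrable M (g (m + X (i + N)))" "integrable M (g m)" using int Xn r by auto
    then show ?thesis unfolding s_def by simp
  qed
  ultimately have "(\<lambda>i. ((\<lambda>h. ((\<integral>x. g (m + h) x \<partial>M) - (\<integral>x. g m x \<partial>M)) / h) \<circ> X) (i + N))
      \<longlonglongrightarrow> integral\<^sup>L M (g' m)"
    by (simp add: comp_def)
  then show "((\<lambda>h. ((\<integral>x. g (m + h) x \<partial>M) - (\<integral>x. g m x \<partial>M)) / h) \<circ> X)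
      \<longlonglongrightarrow> integral\<^sup>L M (g' m)"
    by (rule LIMSEQ_offset)
qed

definition scaled_gauss_density_deriv :: "nat \<Rightarrow> real \<Rightarrow> (nat \<Rightarrow> real) \<Rightarrow> real" where
  "scaled_gauss_density_deriv n t y = (n / t - t * sqnorm n y) * scaled_gauss_density n t y"

lemma scaled_gauss_density_deriv_measurable[measurable]:
  "scaled_gauss_density_deriv n t \<in> borel_measurable (lborel_Pi n)"
  unfolding scaled_gauss_density_deriv_def by measurable

lemma has_real_derivative_scaled_gauss_density:
  assumes t: "t > 0"
  shows "((\<lambda>t. scaled_gauss_density n t y) has_real_derivative scaled_gauss_density_deriv n t y) (at t)"
proof -
  define c where "c = sqrt (2 * pi)"
  have c: "c > 0" unfolding c_def by simp
  define q where "q = sqnorm n y"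
  have "((\<lambda>t. (t / c) ^ n * exp (- (t\<^sup>2 * q) / 2)) has_real_derivative
      (n * (t / c) ^ (n - 1) / c) * exp (- (t\<^sup>2 * q) / 2)
        + (t / c) ^ n * (exp (- (t\<^sup>2 * q) / 2) * (- (t * q)))) (at t)"
    using c by (auto intro!: derivative_eq_intros simp: power2_eq_square)
  moreover have "(n * (t / c) ^ (n - 1) / c) * exp (- (t\<^sup>2 * q) / 2)
        + (t / c) ^ n * (exp (- (t\<^sup>2 * q) / 2) * (- (t * q)))
      = (n / t - t * q) * ((t / c) ^ n * exp (- (t\<^sup>2 * q) / 2))"
  proof (cases n)
    case (Suc k)
    then show ?thesis using t c by (simp add: field_simps)
  qed simp
  ultimately show ?thesis
    by (simp add: scaled_gauss_density_deriv_def scaled_gauss_density_def c_def q_def)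
qed

lemma abs_scaled_gauss_density_deriv_le:
  assumes m: "m > 0" and t: "m / 2 \<le> t" "t \<le> 2 * m" and Q: "sqnorm n y \<le> Q"
  shows "\<bar>scaled_gauss_density_deriv n t y\<bar> \<le> (2 * real n / m + 2 * m * Q) * (2 * m) ^ n"
proof -
  have t_pos: "t > 0" using m t by simp
  have "sqrt (2 * pi) \<ge> 1" using pi_gt3 by simp
  then have "t / sqrt (2 * pi) \<le> t" using t_pos by (simp add: divide_le_eq_1 field_simps)
  then have "t / sqrt (2 * pi) \<le> 2 * m" using t by linarith
  then have "(t / sqrt (2 * pi)) ^ n \<le> (2 * m) ^ n"
    using t_pos by (intro power_mono) auto
  then have "scaled_gauss_density n t y \<le> (2 * m) ^ n"
    using scaled_gauss_density_le[OF t_pos, of n y] by linarith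
  moreover have "\<bar>n / t - t * sqnorm n y\<bar> \<le> 2 * real n / m + 2 * m * Q"
  proof -
    have "n / t \<le> n / (m / 2)" using t m t_pos by (intro divide_left_mono) auto
    then have "n / t \<le> 2 * real n / m" by (simp add: mult.commute)
    moreover have "t * sqnorm n y \<le> 2 * m * Q" using t Q sqnorm_nonneg[of n y] by (intro mult_mono) auto
    moreover have "n / t \<ge> 0" "t * sqnorm n y \<ge> 0" "2 * real n / m \<ge> 0"
      using m t_pos sqnorm_nonneg[of n y] by auto
    ultimately show ?thesis by (simp add: abs_le_iff)
  qed
  ultimately show ?thesis
    unfolding scaled_gauss_density_deriv_def abs_mult
    using scaled_gauss_density_nonneg[OF t_pos] by (intro mult_mono) auto
qed

lemma F_K_has_real_derivative:
  assumes K: "symmetric_convex_body n K" and m: "m > 0"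
  shows "(F_K n K has_real_derivative
    (\<integral>y. scaled_gauss_density_deriv n m y * indicator (body_coords n K) y \<partial>lborel_Pi n)) (at m)"
proof -
  let ?S = "body_coords n K"
  obtain Q where Q: "\<And>y. y \<in> ?S \<Longrightarrow> sqnorm n y \<le> Q"
    using body_coords_sqnorm_bounded[OF symmetric_convex_bodyD(1)[OF K]] by blast
  have [measurable]: "?S \<in> sets (lborel_Pi n)"
    using sets_body_coords[OF symmetric_convex_bodyD(2)[OF K]] by auto
  have int_S: "integrable (lborel_Pi n) (\<lambda>y. c * indicator ?S y)" for c :: real
    using emeasure_body_coords_finite[OF symmetric_convex_bodyD(1)[OF K]]
    by (simp add: integrable_real_indicator)
  have "((\<lambda>t. \<integral>y. scaled_gauss_density n t y * indicator ?S y \<partial>lborel_Pi n) has_real_derivative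
      (\<integral>y. scaled_gauss_density_deriv n m y * indicator ?S y \<partial>lborel_Pi n)) (at m)"
  proof (rule has_real_derivative_integral_dominated[where r = "m/2"
        and w = "\<lambda>y. (2 * real n / m + 2 * m * Q) * (2 * m) ^ n * indicator ?S y"])
    show "integrable (lborel_Pi n) (\<lambda>y. scaled_gauss_density n t y * indicator ?S y)"
      if "\<bar>t - m\<bar> < m / 2" for t
    proof (rule Bochner_Integration.integrable_bound[OF int_S[of "(t / sqrt (2 * pi)) ^ n"]])
      have "t > 0" using that by linarith
      then show "AE y in lborel_Pi n. norm (scaled_gauss_density n t y * indicator ?S y)
          \<le> norm ((t / sqrt (2 * pi)) ^ n * indicator ?S y)"
        using scaled_gauss_density_le scaled_gauss_density_nonneg by (auto simp: indicator_def)
    qed measurable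
    show "((\<lambda>t. scaled_gauss_density n t y * indicator ?S y) has_real_derivative
        scaled_gauss_density_deriv n t y * indicator ?S y) (at t)" if "\<bar>t - m\<bar> < m / 2" for y t
      using that by (intro DERIV_cmult_right has_real_derivative_scaled_gauss_density) linarith
    show "\<bar>scaled_gauss_density_deriv n t y * indicator ?S y\<bar>
        \<le> (2 * real n / m + 2 * m * Q) * (2 * m) ^ n * indicator ?S y" if "\<bar>t - m\<bar> < m / 2" for y t
    proof (cases "y \<in> ?S")
      case True
      have "m / 2 \<le> t" "t \<le> 2 * m" using that abs_less_iff[of "t - m" "m / 2"] by linarith+
      then show ?thesis using abs_scaled_gauss_density_deriv_le[OF m _ _ Q[OF True]] True by simp
    qed simp
  qed (use m int_S in auto)
  then show ?thesis
    by (rule has_field_derivative_transform_within_open[of _ _ _ "{0<..}"])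
      (use m F_K_eq_integral[OF K] in auto)
qed

lemma vartheta_eq_expectation:
  assumes K: "symmetric_convex_body n K" and m: "m > 0"
  shows "vartheta n K m
    = (\<integral>z. indicator (body_coords n K) (divide_coords n m z) * (n - sqnorm n z) \<partial>gauss_space n)"
proof -
  let ?S = "body_coords n K"
  have [measurable]: "?S \<in> sets (lborel_Pi n)"
    using sets_body_coords[OF symmetric_convex_bodyD(2)[OF K]] by auto
  have "vartheta n K m = m * (\<integral>y. scaled_gauss_density_deriv n m y * indicator ?S y \<partial>lborel_Pi n)"
    unfolding vartheta_def using DERIV_imp_deriv[OF F_K_has_real_derivative[OF K m]] by simp
  also have "\<dots> = (\<integral>y. scaled_gauss_density n m y * (indicator ?S y * (n - m\<^sup>2 * sqnorm n y))
      \<partial>lborel_Pi n)"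
    using m by (simp add: scaled_gauss_density_deriv_def field_simps power2_eq_square)
  also have "\<dots> = (\<integral>z. indicator ?S (divide_coords n m z) * (n - m\<^sup>2 * sqnorm n (divide_coords n m z))
      \<partial>gauss_space n)"
    using m by (intro integral_scaled_gauss_density) auto
  also have "\<dots> = (\<integral>z. indicator ?S (divide_coords n m z) * (n - sqnorm n z) \<partial>gauss_space n)"
    using m by (simp add: sqnorm_divide_coords)
  finally show ?thesis .
qed

theorem corollary5p11:
  shows "\<exists>C>0. \<forall>n::nat. \<forall>K m. n \<ge> 1 \<longrightarrow> symmetric_convex_body n K \<longrightarrow> is_median n K m
            \<longrightarrow> vartheta n K m \<le> C * sqrt (real n)"
proof (intro exI[of _ "3/2"] conjI allI impI)
  fix n :: nat and K m
  assume n: "n \<ge> 1" and K: "symmetric_convex_body n K" and median: "is_median n K m"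
  show "vartheta n K m \<le> 3/2 * sqrt (real n)"
  proof (cases "m = 0")
    case False
    then have m: "m > 0" using is_median_nonneg[OF K median] by simp
    have "(\<lambda>z. indicator (body_coords n K) (divide_coords n m z)) \<in> borel_measurable (gauss_space n)"
      using sets_body_coords[OF symmetric_convex_bodyD(2)[OF K]]
      by (intro measurable_compose[OF divide_coords_measurable borel_measurable_indicator])
    then show ?thesis
      unfolding vartheta_eq_expectation[OF K m]
      by (rule gauss_sqnorm_deviation_weighted_le) (use n in \<open>simp_all add: indicator_def\<close>)
  qed (simp add: vartheta_def)
qed simp

end
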